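(* Let $L\ge 2$, let $S=(d,N_1,\dots,N_{L-1},1)$ be a neural network architecture, and let $\Omega\subset\mathbb{R}^d$ be compact. Let $\varrho:\mathbb{R}\to\mathbb{R}$ be continuous but not a polynomial, and such that $\varrho$ is differentiable at some $x_0\in\mathbb{R}$ with $\varrho'(x_0)\neq 0$. Assume that $\mathcal{RNN}_\varrho^\Omega(S)$ is not dense in $C(\Omega)$ (with the supremum norm). Then there does not exist any $\varepsilon>0$ such that the closure $\overline{\mathcal{RNN}_\varrho^\Omega(S)}$ (taken in $C(\Omega)$) is $\varepsilon$-convex in $(C(\Omega),\|\cdot\|_{\sup})$.
   Context: A neural network with architecture $S=(N_0,N_1,\dots,N_L)$ (with $N_0=d$) is a family $\Phi=((A_\ell,b_\ell))_{\ell=1}^L$ with $A_\ell\in\mathbb{R}^{N_\ell\times N_{\ell-1}}$, $b_\ell\in\mathbb{R}^{N_\ell}$; $\mathcal{NN}(S)$ denotes the set of these. For $\varrho:\mathbb{R}\to\mathbb{R}$ and $\Omega\subset\mathbb{R}^d$, the realization $\mathrm{R}_\varrho^\Omega(\Phi):\Omega\to\mathbb{R}^{N_L}$ is $x\mapsto x_L$ with $x_0=x$, $x_\ell=\varrho(A_\ell x_{\ell-1}+b_\ell)$ for $1\le\ell\le L-1$ ($\varrho$ componentwise), $x_L=A_Lx_{L-1}+b_L$; and $\mathcal{RNN}_\varrho^\Omega(S)=\{\mathrm{R}_\varrho^\Omega(\Phi):\Phi\in\mathcal{NN}(S)\}$. For a subset $A$ of a normed space $\mathcal{Y}$, $\mathrm{co}(A)$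 is the convex hull, and $A$ is called $\varepsilon$-convex if $\mathrm{co}(A)\subset A+B_\varepsilon(0)$, where $B_\varepsilon(0)$ is the open $\varepsilon$-ball around $0$ in $\mathcal{Y}$. *)

theory Defs
  imports "HOL-Analysis.Analysis" "HOL-Computational_Algebra.Polynomial"
begin

text \<open>Layer parameters (A, b): a matrix indexed by row/column numbers and a bias vector.
  Vectors of width m are represented as functions nat => real, only indices < m being relevant.\<close>
type_synonym layer = "(nat \<Rightarrow> nat \<Rightarrow> real) \<times> (nat \<Rightarrow> real)"

definition affine :: "nat \<Rightarrow> nat \<Rightarrow> layer \<Rightarrow> (nat \<Rightarrow> real) \<Rightarrow> (nat \<Rightarrow> real)" where
  "affine m n Ab y = (\<lambda>i. if i < m then (\<Sum>j<n. fst Ab i j * y j) + snd Ab i else 0)"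

definition act :: "(real \<Rightarrow> real) \<Rightarrow> nat \<Rightarrow> (nat \<Rightarrow> real) \<Rightarrow> (nat \<Rightarrow> real)" where
  "act \<rho> n y = (\<lambda>i. if i < n then \<rho> (y i) else 0)"

text \<open>net_tail rho n ms Phi y: y is the pre-activation of a layer of width n; the remaining
  layers have output widths ms and parameters Phi. The last layer is affine (no activation).\<close>
fun net_tail :: "(real \<Rightarrow> real) \<Rightarrow> nat \<Rightarrow> nat list \<Rightarrow> layer list \<Rightarrow> (nat \<Rightarrow> real) \<Rightarrow> (nat \<Rightarrow> real)" where
  "net_tail \<rho> n [] [] y = y"
| "net_tail \<rho> n (m # ms) (Ab # \<Phi>) y = net_tail \<rho> m ms \<Phi> (affine m n Ab (act \<rho> n y))"
| "net_tail \<rho> n _ _ y = y"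

text \<open>Realizations of networks with architecture (d, N_1, ..., N_{L-1}, 1), where
  Ns = [N_1, ..., N_{L-1}] and d = CARD('d). The first layer matrix A_1 (N_1 x d) is given by
  its rows W i :: real^'d, with bias c. Output R^1 is identified with R.\<close>
definition RNN :: "(real \<Rightarrow> real) \<Rightarrow> nat list \<Rightarrow> (real^'d \<Rightarrow> real) set" where
  "RNN \<rho> Ns = {(\<lambda>x. net_tail \<rho> (hd Ns) (tl Ns @ [1]) \<Phi>
                     (\<lambda>i. if i < hd Ns then W i \<bullet> x + c i else 0) 0)
               | W c \<Phi>. length \<Phi> = length Ns}"

definition sup_dist :: "'a set \<Rightarrow> ('a \<Rightarrow> real) \<Rightarrow> ('a \<Rightarrow> real) \<Rightarrow> real" where
  "sup_dist \<Omega> f g = (if \<Omega> = {} then 0 else (SUP x\<in>\<Omega>. \<bar>f x - g x\<bar>))"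

definition C_closure :: "'a::topological_space set \<Rightarrow> ('a \<Rightarrow> real) set \<Rightarrow> ('a \<Rightarrow> real) set" where
  "C_closure \<Omega> A = {g. continuous_on \<Omega> g \<and> (\<forall>\<delta>>0. \<exists>f\<in>A. sup_dist \<Omega> f g < \<delta>)}"

definition dense_in_C :: "'a::topological_space set \<Rightarrow> ('a \<Rightarrow> real) set \<Rightarrow> bool" where
  "dense_in_C \<Omega> A \<longleftrightarrow> (\<forall>g. continuous_on \<Omega> g \<longrightarrow> g \<in> C_closure \<Omega> A)"

definition fun_convex_hull :: "('a \<Rightarrow> real) set \<Rightarrow> ('a \<Rightarrow> real) set" where
  "fun_convex_hull A = {h. \<exists>(k::nat) (c::nat \<Rightarrow> real) (f :: nat \<Rightarrow> 'a \<Rightarrow> real). (\<forall>i<k. 0 \<le> c i \<and> f i \<in> A) \<and> (\<Sum>i<k. c i) = 1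
                                  \<and> h = (\<lambda>x. \<Sum>i<k. c i * f i x)}"

text \<open>A is eps-convex in C(\<Omega>): co(A) is contained in A + B_eps(0) (open ball, sup norm).\<close>
definition eps_convex :: "'a set \<Rightarrow> real \<Rightarrow> ('a \<Rightarrow> real) set \<Rightarrow> bool" where
  "eps_convex \<Omega> \<epsilon> A \<longleftrightarrow> (\<forall>h\<in>fun_convex_hull A. \<exists>g\<in>A. sup_dist \<Omega> h g < \<epsilon>)"

end

(* If the closure A of the realisations were eps-convex, it would be a closed linear subspace of
   C(Omega): the last layer is affine, so A is invariant under f |-> a f + c, and applying
   eps-convexity to t f and t g shows that f + g lies within 2 eps / t of A for every t > 0.
   Since rho is differentiable at x0 with nonzero derivative, a hidden neuron can pass a bounded
   scalar through almost unchanged, so A contains every ridge function rho (w . x + b).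
   Following Leshno, Lin, Pinkus and Schocken, the continuous profiles phi with phi (w . x + b) in A
   for all w, b form a locally uniformly closed space invariant under affine reparametrisation.
   Smoothing rho by iterated window means and differentiating in the dilation parameter puts
   every monomial t^k into that space unless rho is a polynomial; hence exp lies in it, A contains
   the algebra spanned by the exp (w . x), and A is dense by Stone-Weierstrass. *)

theory Submission
  imports Defs
begin

section \<open>Smoothing by window means\<close>

definition antideriv :: "(real \<Rightarrow> real) \<Rightarrow> real \<Rightarrow> real" where
  "antideriv f = (SOME F. \<forall>x. (F has_real_derivative f x) (at x))"

lemma antideriv_has_real_derivative:
  assumes "continuous_on UNIV f"
  shows "(antideriv f has_real_derivative f x) (at x)"
proof -
  have "\<exists>F. \<forall>x::real. (-\<infinity>::ereal) < x \<longrightarrow> x < \<infinity> \<longrightarrow> (F has_vector_derivative f x) (at x)"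
    by (rule einterval_antiderivative) (use assms in \<open>auto simp: continuous_on_eq_continuous_at\<close>)
  then have "\<exists>F. \<forall>x. (F has_real_derivative f x) (at x)"
    by (auto simp: has_real_derivative_iff_has_vector_derivative)
  from someI_ex[OF this] show ?thesis unfolding antideriv_def by blast
qed

lemma DERIV_linearization_bound:
  fixes P F :: "real \<Rightarrow> real"
  assumes "\<And>z. (P has_real_derivative F z) (at z)"
    and "\<And>z. z \<in> closed_segment a b \<Longrightarrow> \<bar>F z - c\<bar> \<le> \<eta>"
  shows "\<bar>P b - P a - (b - a) * c\<bar> \<le> \<bar>b - a\<bar> * \<eta>"
proof -
  have ordered: "\<bar>P v - P u - (v - u) * c\<bar> \<le> \<bar>v - u\<bar> * \<eta>"
    if "u < v" "\<And>z. u \<le> z \<Longrightarrow> z \<le> v \<Longrightarrow> \<bar>F z - c\<bar> \<le> \<eta>" for u v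
  proof -
    obtain z where z: "u < z" "z < v" "P v - P u = (v - u) * F z"
      using MVT2[OF \<open>u < v\<close> assms(1)] by blast
    then have "P v - P u - (v - u) * c = (v - u) * (F z - c)"
      by (simp add: algebra_simps)
    then have "\<bar>P v - P u - (v - u) * c\<bar> = \<bar>v - u\<bar> * \<bar>F z - c\<bar>"
      by (simp only: abs_mult)
    also have "\<dots> \<le> \<bar>v - u\<bar> * \<eta>"
      using that(2)[of z] z by (intro mult_left_mono) auto
    finally show ?thesis .
  qed
  consider "a < b" | "b < a" | "a = b" by linarith
  then show ?thesis
  proof cases
    case 1
    then show ?thesis by (intro ordered) (auto intro: assms(2) simp: closed_segment_eq_real_ivl)
  next
    case 2
    have "\<bar>P a - P b - (a - b) * c\<bar> \<le> \<bar>a - b\<bar> * \<eta>"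
      using 2 by (intro ordered) (auto intro: assms(2) simp: closed_segment_eq_real_ivl)
    then show ?thesis by (simp add: abs_minus_commute algebra_simps)
  qed simp
qed

definition window_mean :: "real \<Rightarrow> (real \<Rightarrow> real) \<Rightarrow> real \<Rightarrow> real" where
  "window_mean h f t = (antideriv f (t + h) - antideriv f t) / h"

definition forward_diff :: "real \<Rightarrow> (real \<Rightarrow> real) \<Rightarrow> real \<Rightarrow> real" where
  "forward_diff h f t = (f (t + h) - f t) / h"

lemma forward_diff_has_real_derivative:
  assumes "\<And>x. (F has_real_derivative G x) (at x)"
  shows "(forward_diff h F has_real_derivative forward_diff h G t) (at t)"
proof -
  have "((\<lambda>t. F (t + h)) has_real_derivative G (t + h)) (at t)"
    using assms[of "t + h"] by (simp add: DERIV_shift)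
  from DERIV_cdivide[OF DERIV_diff[OF this assms], of h] show ?thesis
    unfolding forward_diff_def[abs_def] .
qed

lemma window_mean_has_real_derivative:
  assumes "continuous_on UNIV f"
  shows "(window_mean h f has_real_derivative forward_diff h f t) (at t)"
proof -
  have "window_mean h f = forward_diff h (antideriv f)"
    by (simp add: fun_eq_iff window_mean_def forward_diff_def)
  then show ?thesis
    using forward_diff_has_real_derivative[OF antideriv_has_real_derivative[OF assms]] by simp
qed

lemma continuous_on_window_mean:
  "continuous_on UNIV f \<Longrightarrow> continuous_on UNIV (window_mean h f)"
  by (meson DERIV_isCont continuous_at_imp_continuous_on window_mean_has_real_derivative)

lemma continuous_on_forward_diff:
  assumes "continuous_on UNIV f"
  shows "continuous_on UNIV (forward_diff h f)"
proof -
  have "forward_diff h f = (\<lambda>t. (1 / h) * (f (t + h) - f t))"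
    by (simp add: fun_eq_iff forward_diff_def)
  moreover have "continuous_on UNIV (\<lambda>t. (1 / h) * (f (t + h) - f t))"
    by (intro continuous_intros continuous_on_compose2[OF assms]) auto
  ultimately show ?thesis by simp
qed

lemma funpow_forward_diff_has_real_derivative:
  assumes "\<And>x. (F has_real_derivative G x) (at x)"
  shows "((forward_diff h ^^ k) F has_real_derivative (forward_diff h ^^ k) G t) (at t)"
  using assms by (induction k arbitrary: t) (auto intro: forward_diff_has_real_derivative)

lemma continuous_on_funpow_window_mean:
  "continuous_on UNIV f \<Longrightarrow> continuous_on UNIV ((window_mean h ^^ k) f)"
  by (induction k) (auto intro: continuous_on_window_mean)

lemma continuous_on_funpow_forward_diff:
  "continuous_on UNIV f \<Longrightarrow> continuous_on UNIV ((forward_diff h ^^ k) f)"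
  by (induction k) (auto intro: continuous_on_forward_diff)

text \<open>Each window mean gains one derivative, namely a forward difference, and forward
  differences commute with differentiation.\<close>
lemma funpow_window_mean_derivatives:
  assumes "continuous_on UNIV f"
  obtains D where "D 0 = (window_mean h ^^ k) f"
    and "\<And>m t. m < k \<Longrightarrow> (D m has_real_derivative D (Suc m) t) (at t)"
    and "\<And>m. m \<le> k \<Longrightarrow> continuous_on UNIV (D m)"
    and "D k = (forward_diff h ^^ k) f"
proof -
  have "\<exists>D. D 0 = (window_mean h ^^ k) f \<and> (\<forall>m<k. \<forall>t. (D m has_real_derivative D (Suc m) t) (at t))
    \<and> (\<forall>m\<le>k. continuous_on UNIV (D m)) \<and> D k = (forward_diff h ^^ k) f"
    using assms
  proof (induction k arbitrary: f)
    case 0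
    then show ?case by (intro exI[of _ "\<lambda>_. f"]) auto
  next
    case (Suc k)
    obtain D where D: "D 0 = (window_mean h ^^ k) (window_mean h f)"
      "\<forall>m<k. \<forall>t. (D m has_real_derivative D (Suc m) t) (at t)"
      "\<forall>m\<le>k. continuous_on UNIV (D m)" "D k = (forward_diff h ^^ k) (window_mean h f)"
      using Suc.IH[OF continuous_on_window_mean[OF Suc.prems]] by blast
    have last: "((forward_diff h ^^ k) (window_mean h f) has_real_derivative
        (forward_diff h ^^ Suc k) f t) (at t)" for t
      using funpow_forward_diff_has_real_derivative[OF window_mean_has_real_derivative[OF Suc.prems]]
      by (simp only: funpow_Suc_right comp_def)
    show ?case
      using D last continuous_on_funpow_forward_diff[OF Suc.prems, where h=h and k="Suc k"]
      by (intro exI[of _ "D(Suc k := (forward_diff h ^^ Suc k) f)"])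
         (auto simp: less_Suc_eq le_Suc_eq funpow_Suc_right simp del: funpow.simps)
  qed
  then show ?thesis using that by blast
qed

lemma funpow_window_mean_near:
  assumes "continuous_on UNIV f" "h > 0"
    and "\<And>s. 0 \<le> s \<Longrightarrow> s \<le> real j * h \<Longrightarrow> \<bar>f (v + s) - c\<bar> \<le> \<epsilon>"
  shows "\<bar>(window_mean h ^^ j) f v - c\<bar> \<le> \<epsilon>"
  using assms(3)
proof (induction j arbitrary: v)
  case 0
  then show ?case using "0.prems"[of 0] by simp
next
  case (Suc j)
  let ?G = "(window_mean h ^^ j) f"
  have "\<bar>antideriv ?G (v + h) - antideriv ?G v - (v + h - v) * c\<bar> \<le> \<bar>v + h - v\<bar> * \<epsilon>"
  proof (rule DERIV_linearization_bound)
    show "(antideriv ?G has_real_derivative ?G z) (at z)" for z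
      by (rule antideriv_has_real_derivative[OF continuous_on_funpow_window_mean[OF assms(1)]])
    fix z assume "z \<in> closed_segment v (v + h)"
    then have z: "v \<le> z" "z \<le> v + h" using assms(2) by (auto simp: closed_segment_eq_real_ivl)
    show "\<bar>?G z - c\<bar> \<le> \<epsilon>"
      using Suc.IH[of z] Suc.prems[of "z - v + _"] z by (simp add: algebra_simps)
  qed
  then have "\<bar>(antideriv ?G (v + h) - antideriv ?G v - h * c) / h\<bar> \<le> \<epsilon>"
    using assms(2) by (simp add: abs_div pos_divide_le_eq mult.commute)
  moreover have "(antideriv ?G (v + h) - antideriv ?G v - h * c) / h = window_mean h ?G v - c"
    using assms(2) by (simp add: window_mean_def diff_divide_distrib)
  ultimately show ?case by simp
qed

lemma funpow_window_mean_tendsto: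
  assumes "continuous_on UNIV f"
  shows "(\<lambda>n. (window_mean (1 / Suc n) ^^ k) f x) \<longlonglongrightarrow> f x"
proof (rule LIMSEQ_I)
  fix r :: real assume "r > 0"
  moreover have "isCont f x" using assms by (simp add: continuous_on_eq_continuous_at)
  ultimately obtain \<delta> where "\<delta> > 0" and \<delta>: "\<And>y. dist y x < \<delta> \<Longrightarrow> dist (f y) (f x) < r / 2"
    unfolding continuous_at_eps_delta by (meson half_gt_zero)
  obtain N :: nat where N: "real k / \<delta> < N" using reals_Archimedean2 by blast
  have "norm ((window_mean (1 / Suc n) ^^ k) f x - f x) < r" if "n \<ge> N" for n
  proof -
    have "real k < \<delta> * N" using N \<open>\<delta> > 0\<close> by (simp add: divide_less_eq mult.commute)
    also have "\<dots> \<le> \<delta> * Suc n" using that \<open>\<delta> > 0\<close> by (intro mult_left_mono) auto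
    finally have "real k * (1 / Suc n) < \<delta>" by (simp add: divide_less_eq mult.commute)
    then have "\<bar>(window_mean (1 / Suc n) ^^ k) f (x + 0) - f x\<bar> \<le> r / 2"
      using \<delta>[of "x + 0 + _"]
      by (intro funpow_window_mean_near[OF assms]) (auto simp: dist_real_def less_imp_le)
    then show ?thesis using \<open>r > 0\<close> by simp
  qed
  then show "\<exists>N. \<forall>n\<ge>N. norm ((window_mean (1 / Suc n) ^^ k) f x - f x) < r" by blast
qed

lemma window_mean_riemann_sum:
  fixes f :: "real \<Rightarrow> real"
  assumes f: "continuous_on UNIV f" and "h > 0" "n > 0"
    and osc: "\<And>z z'. z \<in> {t..t+h} \<Longrightarrow> z' \<in> {t..t+h} \<Longrightarrow> \<bar>z - z'\<bar> \<le> h / n \<Longrightarrow> \<bar>f z - f z'\<bar> \<le> e"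
  shows "\<bar>window_mean h f t - (\<Sum>i<n. (1 / n) * f (t + real i * (h / n)))\<bar> \<le> e"
proof -
  define a where "a i = t + real i * (h / n)" for i
  have step: "\<bar>antideriv f (a (Suc i)) - antideriv f (a i) - (h / n) * f (a i)\<bar> \<le> (h / n) * e"
    if "i < n" for i
  proof -
    have len: "a (Suc i) - a i = h / n" by (simp add: a_def field_simps add_divide_distrib)
    moreover have "h / n > 0" using \<open>h > 0\<close> \<open>n > 0\<close> by simp
    ultimately have "a i \<le> a (Suc i)" by linarith
    have "real (Suc i) * h \<le> real n * h"
      using that \<open>h > 0\<close> by (intro mult_right_mono) auto
    then have "t \<le> a i" "a (Suc i) \<le> t + h"
      using \<open>h > 0\<close> \<open>n > 0\<close> by (auto simp: a_def field_simps)
    have "\<bar>antideriv f (a (Suc i)) - antideriv f (a i) - (a (Suc i) - a i) * f (a i)\<bar>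
        \<le> \<bar>a (Suc i) - a i\<bar> * e"
    proof (rule DERIV_linearization_bound[OF antideriv_has_real_derivative[OF f]])
      fix z assume "z \<in> closed_segment (a i) (a (Suc i))"
      then have "a i \<le> z" "z \<le> a (Suc i)"
        using \<open>a i \<le> a (Suc i)\<close> by (simp_all add: closed_segment_eq_real_ivl1)
      then show "\<bar>f z - f (a i)\<bar> \<le> e"
        using osc[of z "a i"] len \<open>t \<le> a i\<close> \<open>a (Suc i) \<le> t + h\<close> by simp
    qed
    then show ?thesis using len \<open>h > 0\<close> by simp
  qed
  have "antideriv f (t + h) - antideriv f t = (\<Sum>i<n. antideriv f (a (Suc i)) - antideriv f (a i))"
    using sum_lessThan_telescope[of "\<lambda>i. antideriv f (a i)" n] \<open>n > 0\<close> by (simp add: a_def)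
  then have "\<bar>(antideriv f (t + h) - antideriv f t) - (\<Sum>i<n. (h / n) * f (a i))\<bar>
        \<le> (\<Sum>i<n. \<bar>antideriv f (a (Suc i)) - antideriv f (a i) - (h / n) * f (a i)\<bar>)"
    by (simp add: sum_subtractf[symmetric] sum_abs)
  also have "\<dots> \<le> h * e" using step sum_mono[of "{..<n}", OF step] \<open>n > 0\<close> by simp
  finally have "\<bar>(antideriv f (t + h) - antideriv f t) - (\<Sum>i<n. (h / n) * f (a i))\<bar> / h \<le> e"
    using \<open>h > 0\<close> by (simp add: pos_divide_le_eq mult.commute)
  moreover have "(antideriv f (t + h) - antideriv f t) - (\<Sum>i<n. (h / n) * f (a i))
      = h * (window_mean h f t - (\<Sum>i<n. (1 / n) * f (t + real i * (h / n))))"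
  proof -
    have "h * window_mean h f t = antideriv f (t + h) - antideriv f t"
      using \<open>h > 0\<close> by (simp add: window_mean_def)
    then show ?thesis by (simp add: right_diff_distrib sum_distrib_left a_def)
  qed
  ultimately show ?thesis using \<open>h > 0\<close> by (simp add: abs_mult)
qed

section \<open>Limits of polynomials\<close>

definition lagrange_basis :: "nat \<Rightarrow> nat \<Rightarrow> real poly" where
  "lagrange_basis k i =
     smult (1 / (\<Prod>j\<in>{..<k}-{i}. (real i - real j))) (\<Prod>j\<in>{..<k}-{i}. [:- real j, 1:])"

lemma poly_lagrange_basis:
  assumes "i < k" "j < k"
  shows "poly (lagrange_basis k i) (real j) = (if i = j then 1 else 0)"
proof (cases "i = j")
  case True
  have "(\<Prod>j'\<in>{..<k}-{i}. (real i - real j')) \<noteq> 0" by (auto simp: prod_zero_iff)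
  then show ?thesis using True unfolding lagrange_basis_def poly_smult poly_prod by simp
next
  case False
  then have "(\<Prod>j'\<in>{..<k}-{i}. poly [:- real j', 1:] (real j)) = 0"
    using assms by (intro prod_zero) auto
  then show ?thesis using False unfolding lagrange_basis_def poly_smult poly_prod by simp
qed

lemma degree_lagrange_basis:
  assumes "i < k"
  shows "degree (lagrange_basis k i) < k"
proof -
  have "degree (\<Prod>j\<in>{..<k}-{i}. [:- real j, 1:]) \<le> (\<Sum>j\<in>{..<k}-{i}. degree [:- real j, 1:])"
    using degree_prod_sum_le[of "{..<k}-{i}" "\<lambda>j. [:- real j, 1:]"] by (simp add: o_def)
  also have "\<dots> < k" using assms by simp
  finally show ?thesis
    unfolding lagrange_basis_def using degree_smult_le le_less_trans by blast
qed

lemma poly_eq_lagrange_interpolation: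
  assumes "degree q < k"
  shows "poly q x = (\<Sum>i<k. poly q (real i) * poly (lagrange_basis k i) x)"
proof -
  define L where "L = (\<Sum>i<k. smult (poly q (real i)) (lagrange_basis k i))"
  have "degree (smult c (lagrange_basis k i)) \<le> k - 1" if "i < k" for c i
    using degree_smult_le[of c "lagrange_basis k i"] degree_lagrange_basis[OF that] by linarith
  then have "degree L \<le> k - 1"
    unfolding L_def by (intro degree_sum_le) auto
  moreover have "poly L (real j) = poly q (real j)" if "j < k" for j
  proof -
    have "poly L (real j) = (\<Sum>i<k. if i = j then poly q (real j) else 0)"
      unfolding L_def poly_sum poly_smult using that by (intro sum.cong) (simp_all add: poly_lagrange_basis)
    then show ?thesis using that by simp
  qed
  moreover have "card (real ` {..<k}) = k" by (simp add: card_image)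
  ultimately have "q = L"
    using assms by (intro poly_eqI_degree[of "real ` {..<k}"]) auto
  moreover have "poly L x = (\<Sum>i<k. poly q (real i) * poly (lagrange_basis k i) x)"
    by (simp add: L_def poly_sum)
  ultimately show ?thesis by simp
qed

text \<open>By Lagrange interpolation at 0, ..., k-1, polynomials of degree < k depend linearly on
  k of their values, so the limit inherits the interpolation formula.\<close>
lemma poly_of_tendsto_bounded_degree:
  fixes f :: "real \<Rightarrow> real"
  assumes "\<And>n. degree (q n) < k" "\<And>x. (\<lambda>n. poly (q n) x) \<longlonglongrightarrow> f x"
  shows "\<exists>p. \<forall>x. f x = poly p x"
proof -
  have "f x = poly (\<Sum>i<k. smult (f (real i)) (lagrange_basis k i)) x" for x
  proof -
    have "(\<lambda>n. \<Sum>i<k. poly (q n) (real i) * poly (lagrange_basis k i) x)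
        \<longlonglongrightarrow> (\<Sum>i<k. f (real i) * poly (lagrange_basis k i) x)"
      by (intro tendsto_sum tendsto_mult_right assms(2))
    then have "(\<lambda>n. poly (q n) x) \<longlonglongrightarrow> (\<Sum>i<k. f (real i) * poly (lagrange_basis k i) x)"
      by (simp only: poly_eq_lagrange_interpolation[OF assms(1), symmetric])
    then have "f x = (\<Sum>i<k. f (real i) * poly (lagrange_basis k i) x)"
      by (rule LIMSEQ_unique[OF assms(2)])
    then show ?thesis by (simp add: poly_sum)
  qed
  then show ?thesis by blast
qed

lemma poly_of_vanishing_derivative:
  fixes D :: "nat \<Rightarrow> real \<Rightarrow> real"
  assumes "\<And>m t. m < k \<Longrightarrow> (D m has_real_derivative D (Suc m) t) (at t)"
    and "\<And>t. D k t = 0" and "k > 0"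
  obtains q where "degree q < k" "\<And>x. D 0 x = poly q x"
proof -
  define D' where "D' m = (if m \<le> k then D m else (\<lambda>_. 0))" for m
  have "D k = (\<lambda>_. 0)" using assms(2) by auto
  then have D': "(D' m has_real_derivative D' (Suc m) x) (at x)" for m x
    using assms(1) by (cases m k rule: linorder_cases) (auto simp: D'_def)
  define q where "q = (\<Sum>m<k. monom (D m 0 / fact m) m)"
  have "D 0 x = poly q x" for x
  proof -
    obtain t where "D 0 x = (\<Sum>m<k. (D' m 0 / fact m) * x ^ m) + (D' k t / fact k) * x ^ k"
      using Maclaurin_all_le[of D' "D 0" x k] D' by (auto simp: D'_def)
    then show ?thesis using assms(2) by (simp add: q_def poly_sum poly_monom D'_def)
  qed
  moreover have "degree q \<le> k - 1"
    unfolding q_def by (rule degree_sum_le) (auto intro: order_trans[OF degree_monom_le])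
  then have "degree q < k" using assms(3) by linarith
  ultimately show ?thesis using that by metis
qed

section \<open>Dilation-invariant spaces of profiles\<close>

locale dilation_invariant_space =
  fixes U :: "(real \<Rightarrow> real) set"
  assumes continuous: "\<And>\<phi>. \<phi> \<in> U \<Longrightarrow> continuous_on UNIV \<phi>"
    and lincomb: "\<And>\<phi> \<psi> a. \<phi> \<in> U \<Longrightarrow> \<psi> \<in> U \<Longrightarrow> (\<lambda>t. a * \<phi> t + \<psi> t) \<in> U"
    and const: "\<And>c. (\<lambda>t. c) \<in> U"
    and affine_reparam: "\<And>\<phi> s c. \<phi> \<in> U \<Longrightarrow> (\<lambda>t. \<phi> (s * t + c)) \<in> U"
    and locally_uniformly_closed: "\<And>\<phi>. continuous_on UNIV \<phi> \<Longrightarrow>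
        (\<And>R e. e > 0 \<Longrightarrow> \<exists>\<psi>\<in>U. \<forall>t. \<bar>t\<bar> \<le> R \<longrightarrow> \<bar>\<phi> t - \<psi> t\<bar> \<le> e) \<Longrightarrow> \<phi> \<in> U"
begin

lemma scale_mem: "\<phi> \<in> U \<Longrightarrow> (\<lambda>t. a * \<phi> t) \<in> U"
  using lincomb[of \<phi> "\<lambda>t. 0" a] const by simp

lemma sum_mem: "(\<And>i. i < (n::nat) \<Longrightarrow> \<phi> i \<in> U) \<Longrightarrow> (\<lambda>t. \<Sum>i<n. \<phi> i t) \<in> U"
proof (induction n)
  case 0
  then show ?case using const[of 0] by simp
next
  case (Suc n)
  then show ?case using lincomb[of "\<phi> n" "\<lambda>t. \<Sum>i<n. \<phi> i t" 1] by (simp add: add.commute)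
qed

text \<open>The derivative in the dilation parameter: (g((1+h)t) - g(t))/h tends to t g'(t)
  locally uniformly as h goes to 0.\<close>
lemma times_derivative_mem:
  assumes "g \<in> U" and g': "\<And>t. (g has_real_derivative g' t) (at t)" "continuous_on UNIV g'"
  shows "(\<lambda>t. t * g' t) \<in> U"
proof (rule locally_uniformly_closed)
  show "continuous_on UNIV (\<lambda>t. t * g' t)" by (intro continuous_intros g')
  fix R e :: real assume "e > 0"
  define R' where "R' = max R 1"
  have R': "R' \<ge> 1" "R \<le> R'" by (auto simp: R'_def)
  have "uniformly_continuous_on {-2*R'..2*R'} g'"
    by (rule compact_uniformly_continuous) (auto intro: continuous_on_subset[OF g'(2)])
  moreover have "e / R' > 0" using \<open>e > 0\<close> R' by simp
  ultimately obtain d where "d > 0" and d: "\<forall>x\<in>{-2*R'..2*R'}. \<forall>x'\<in>{-2*R'..2*R'}.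
      dist x' x < d \<longrightarrow> dist (g' x') (g' x) < e / R'"
    unfolding uniformly_continuous_on_def by blast
  define h where "h = min (d / (2 * R')) (1/2)"
  have "h > 0" "h \<le> 1/2" using \<open>d > 0\<close> R' by (auto simp: h_def)
  have "h * R' \<le> d / 2" using R' by (simp add: h_def min_mult_distrib_right)
  define \<psi> where "\<psi> t = (1/h) * g ((1 + h) * t) + (-1/h) * g t" for t
  have "\<psi> \<in> U"
    unfolding \<psi>_def[abs_def]
    by (rule lincomb[OF _ scale_mem[OF \<open>g \<in> U\<close>]]) (use affine_reparam[OF \<open>g \<in> U\<close>, of "1 + h" 0] in simp)
  moreover have "\<bar>t * g' t - \<psi> t\<bar> \<le> e" if "\<bar>t\<bar> \<le> R" for t
  proof -
    have t: "\<bar>t\<bar> \<le> R'" using that R' by simp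
    have "\<bar>g (t + h * t) - g t - (t + h * t - t) * g' t\<bar> \<le> \<bar>t + h * t - t\<bar> * (e / R')"
    proof (rule DERIV_linearization_bound[OF g'(1)])
      fix z assume "z \<in> closed_segment t (t + h * t)"
      then have "\<bar>z - t\<bar> \<le> h * \<bar>t\<bar>"
        using segment_bound1 \<open>h > 0\<close> by (fastforce simp: abs_mult)
      also have "\<dots> \<le> h * R'" using t \<open>h > 0\<close> by (simp add: mult_left_mono)
      finally have "\<bar>z - t\<bar> \<le> h * R'" .
      moreover have "h * R' \<le> R'" using \<open>h \<le> 1/2\<close> R' by (simp add: mult_left_le_one_le)
      ultimately have "z \<in> {-2*R'..2*R'}" "t \<in> {-2*R'..2*R'}" "dist z t < d"
        using t \<open>h * R' \<le> d / 2\<close> \<open>d > 0\<close> by (auto simp: dist_real_def)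
      then show "\<bar>g' z - g' t\<bar> \<le> e / R'" using d by (fastforce simp: dist_real_def)
    qed
    moreover have "\<psi> t - t * g' t = (g (t + h * t) - g t - (t + h * t - t) * g' t) / h"
      using \<open>h > 0\<close> by (simp add: \<psi>_def field_simps)
    ultimately have "\<bar>\<psi> t - t * g' t\<bar> \<le> \<bar>t\<bar> * (e / R')"
      using \<open>h > 0\<close> by (simp add: abs_divide abs_mult divide_le_eq mult.commute mult.left_commute)
    also have "\<dots> \<le> e" using t \<open>e > 0\<close> R' by (simp add: divide_le_eq mult.commute mult_left_mono)
    finally show ?thesis by (simp add: abs_minus_commute)
  qed
  ultimately show "\<exists>\<psi>\<in>U. \<forall>t. \<bar>t\<bar> \<le> R \<longrightarrow> \<bar>t * g' t - \<psi> t\<bar> \<le> e" by blast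
qed

lemma power_times_derivative_mem:
  assumes "D 0 \<in> U" "\<And>m t. m < k \<Longrightarrow> (D m has_real_derivative D (Suc m) t) (at t)"
    "\<And>m. m \<le> k \<Longrightarrow> continuous_on UNIV (D m)"
  shows "(\<lambda>t. t ^ k * D k t) \<in> U"
  using assms
proof (induction k)
  case 0
  then show ?case by simp
next
  case (Suc k)
  have IH: "(\<lambda>t. t ^ k * D k t) \<in> U" using Suc by simp
  define G' where "G' t = real k * t ^ (k - 1) * D k t + t ^ k * D (Suc k) t" for t
  have "((\<lambda>t. t ^ k * D k t) has_real_derivative G' t) (at t)" for t
    unfolding G'_def using Suc.prems(2) by (auto intro!: derivative_eq_intros)
  moreover have "continuous_on UNIV G'"
    unfolding G'_def[abs_def] using Suc.prems(3) by (intro continuous_intros) auto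
  ultimately have "(\<lambda>t. (- real k) * (t ^ k * D k t) + t * G' t) \<in> U"
    by (intro lincomb[OF IH] times_derivative_mem[OF IH])
  moreover have "(- real k) * (t ^ k * D k t) + t * G' t = t ^ Suc k * D (Suc k) t" for t
    by (cases k) (simp_all add: G'_def algebra_simps)
  ultimately show ?case by simp
qed

text \<open>Rescaling t to w t + b with w small makes the k-th derivative nearly the constant D k b.\<close>
lemma monomial_times_derivative_at_mem:
  assumes "D 0 \<in> U" "\<And>m t. m < k \<Longrightarrow> (D m has_real_derivative D (Suc m) t) (at t)"
    "\<And>m. m \<le> k \<Longrightarrow> continuous_on UNIV (D m)"
  shows "(\<lambda>t. t ^ k * D k b) \<in> U"
proof (rule locally_uniformly_closed)
  have rescaled: "(\<lambda>t. t ^ k * D k (w * t + b)) \<in> U" if "w \<noteq> 0" for w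
  proof -
    define D' where "D' m t = w ^ m * D m (w * t + b)" for m t
    have "D' 0 \<in> U" unfolding D'_def[abs_def] using affine_reparam[OF assms(1)] by simp
    moreover have "(D' m has_real_derivative D' (Suc m) t) (at t)" if "m < k" for m t
    proof -
      have "((\<lambda>t. D m (w * t + b)) has_real_derivative D (Suc m) (w * t + b) * w) (at t)"
        by (rule DERIV_chain2[OF assms(2)[OF that]]) (auto intro!: derivative_eq_intros)
      from DERIV_cmult[OF this, of "w ^ m"] show ?thesis
        unfolding D'_def by (simp add: algebra_simps)
    qed
    moreover have "continuous_on UNIV (D' m)" if "m \<le> k" for m
      unfolding D'_def[abs_def]
      by (intro continuous_intros continuous_on_compose2[OF assms(3)[OF that]]) auto
    ultimately have "(\<lambda>t. t ^ k * D' k t) \<in> U" by (rule power_times_derivative_mem)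
    from scale_mem[OF this, of "1 / w ^ k"] show ?thesis using that by (simp add: D'_def)
  qed
  show "continuous_on UNIV (\<lambda>t. t ^ k * D k b)" by (intro continuous_intros)
  fix R e :: real assume "e > 0"
  define R' where "R' = max R 1"
  have R': "R' \<ge> 1" "R \<le> R'" by (auto simp: R'_def)
  have "isCont (D k) b" using assms(3) by (simp add: continuous_on_eq_continuous_at)
  moreover have "e / R' ^ k > 0" using \<open>e > 0\<close> R' by simp
  ultimately obtain \<delta> where "\<delta> > 0" and \<delta>: "\<And>y. dist y b < \<delta> \<Longrightarrow> dist (D k y) (D k b) < e / R' ^ k"
    unfolding continuous_at_eps_delta by blast
  define w where "w = \<delta> / (2 * R')"
  have "w > 0" using \<open>\<delta> > 0\<close> R' by (simp add: w_def)
  have "\<bar>t ^ k * D k b - t ^ k * D k (w * t + b)\<bar> \<le> e" if "\<bar>t\<bar> \<le> R" for t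
  proof -
    have t: "\<bar>t\<bar> \<le> R'" using that R' by simp
    have "\<bar>w * t\<bar> \<le> w * R'" using \<open>w > 0\<close> t by (simp add: abs_mult mult_left_mono)
    also have "\<dots> < \<delta>" using R' \<open>\<delta> > 0\<close> by (simp add: w_def)
    finally have "\<bar>D k (w * t + b) - D k b\<bar> < e / R' ^ k" using \<delta>[of "w * t + b"] by (simp add: dist_real_def)
    then have "\<bar>t\<bar> ^ k * \<bar>D k (w * t + b) - D k b\<bar> \<le> R' ^ k * (e / R' ^ k)"
      using t by (intro mult_mono power_mono) auto
    then show ?thesis
      using R' by (simp add: abs_mult power_abs right_diff_distrib[symmetric] abs_minus_commute)
  qed
  then show "\<exists>\<psi>\<in>U. \<forall>t. \<bar>t\<bar> \<le> R \<longrightarrow> \<bar>t ^ k * D k b - \<psi> t\<bar> \<le> e"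
    using rescaled[of w] \<open>w > 0\<close> by (intro bexI[of _ "\<lambda>t. t ^ k * D k (w * t + b)"]) auto
qed

lemma window_mean_mem:
  assumes "f \<in> U" "h > 0"
  shows "window_mean h f \<in> U"
proof (rule locally_uniformly_closed)
  have f: "continuous_on UNIV f" using continuous[OF assms(1)] .
  then show "continuous_on UNIV (window_mean h f)" by (rule continuous_on_window_mean)
  fix R e :: real assume "e > 0"
  define S where "S = {-\<bar>R\<bar>..\<bar>R\<bar> + h}"
  have "uniformly_continuous_on S f"
    unfolding S_def by (rule compact_uniformly_continuous) (auto intro: continuous_on_subset[OF f])
  then obtain d where "d > 0" and d: "\<forall>x\<in>S. \<forall>x'\<in>S. dist x' x < d \<longrightarrow> dist (f x') (f x) < e"
    using \<open>e > 0\<close> unfolding uniformly_continuous_on_def by blast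
  obtain n :: nat where "h / d < n" using reals_Archimedean2 by blast
  then have "n > 0" "h / n < d"
    using \<open>d > 0\<close> \<open>h > 0\<close> by (auto simp: divide_less_eq mult.commute intro: gr0I)
  define \<psi> where "\<psi> t = (\<Sum>i<n. (1 / n) * f (t + real i * (h / n)))" for t
  have "\<psi> \<in> U"
    unfolding \<psi>_def using affine_reparam[OF assms(1), of 1] by (intro sum_mem scale_mem) simp
  moreover have "\<bar>window_mean h f t - \<psi> t\<bar> \<le> e" if "\<bar>t\<bar> \<le> R" for t
    unfolding \<psi>_def
  proof (rule window_mean_riemann_sum[OF f \<open>h > 0\<close> \<open>n > 0\<close>])
    fix z z' assume "z \<in> {t..t+h}" "z' \<in> {t..t+h}" "\<bar>z - z'\<bar> \<le> h / n"
    moreover from this have "z \<in> S" "z' \<in> S" using that by (auto simp: S_def)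
    ultimately show "\<bar>f z - f z'\<bar> \<le> e"
      using d[rule_format, of z' z] \<open>h / n < d\<close> by (simp add: dist_real_def)
  qed
  ultimately show "\<exists>\<psi>\<in>U. \<forall>t. \<bar>t\<bar> \<le> R \<longrightarrow> \<bar>window_mean h f t - \<psi> t\<bar> \<le> e" by blast
qed

lemma funpow_window_mean_mem: "f \<in> U \<Longrightarrow> h > 0 \<Longrightarrow> (window_mean h ^^ k) f \<in> U"
  by (induction k) (auto intro: window_mean_mem)

text \<open>If t^k were missing from U, the k-th derivative (a k-th forward difference) of every
  smoothed profile in U would vanish identically.\<close>
lemma funpow_window_mean_poly_if_monomial_notin:
  assumes "f \<in> U" "h > 0" "k > 0" "(\<lambda>t. t ^ k) \<notin> U"
  obtains q where "degree q < k" "\<And>x. (window_mean h ^^ k) f x = poly q x"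
proof -
  obtain D where D: "D 0 = (window_mean h ^^ k) f"
    "\<And>m t. m < k \<Longrightarrow> (D m has_real_derivative D (Suc m) t) (at t)"
    "\<And>m. m \<le> k \<Longrightarrow> continuous_on UNIV (D m)"
    using funpow_window_mean_derivatives[OF continuous[OF assms(1)]] by metis
  have "D 0 \<in> U" using D(1) funpow_window_mean_mem[OF assms(1,2)] by simp
  have "D k t = 0" for t
  proof (rule ccontr)
    assume "D k t \<noteq> 0"
    have "(\<lambda>s. (1 / D k t) * (s ^ k * D k t)) \<in> U"
      by (intro scale_mem monomial_times_derivative_at_mem[OF \<open>D 0 \<in> U\<close> D(2,3)])
    then show False using assms(4) \<open>D k t \<noteq> 0\<close> by simp
  qed
  then obtain q where "degree q < k" "\<And>x. D 0 x = poly q x"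
    using poly_of_vanishing_derivative[of k D] D(2) assms(3) by blast
  then show ?thesis using that D(1) by simp
qed

lemma monomial_mem:
  assumes "\<rho> \<in> U" "\<not> (\<exists>p. \<forall>x. \<rho> x = poly p x)"
  shows "(\<lambda>t. t ^ k) \<in> U"
proof (rule ccontr)
  assume notin: "(\<lambda>t. t ^ k) \<notin> U"
  then have "k > 0" using const[of 1] by (auto intro: gr0I)
  have "\<exists>q. degree q < k \<and> (\<forall>x. (window_mean (1 / Suc n) ^^ k) \<rho> x = poly q x)" for n
    by (rule funpow_window_mean_poly_if_monomial_notin[OF assms(1) _ \<open>k > 0\<close> notin]) auto
  then obtain q where deg: "\<And>n. degree (q n) < k"
    and q: "\<And>n x. (window_mean (1 / Suc n) ^^ k) \<rho> x = poly (q n) x"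
    by metis
  have "(\<lambda>n. poly (q n) x) \<longlonglongrightarrow> \<rho> x" for x
    using funpow_window_mean_tendsto[OF continuous[OF assms(1)], of k x] by (simp only: q)
  then have "\<exists>p. \<forall>x. \<rho> x = poly p x" by (rule poly_of_tendsto_bounded_degree[OF deg])
  then show False using assms(2) by blast
qed

lemma exp_mem:
  assumes "\<And>k. (\<lambda>t. t ^ k) \<in> U"
  shows "exp \<in> U"
proof (rule locally_uniformly_closed)
  show "continuous_on UNIV (exp :: real \<Rightarrow> real)" by (intro continuous_intros)
  fix R e :: real assume "e > 0"
  have "(\<lambda>n. inverse (fact n) * \<bar>R\<bar> ^ n) \<longlonglongrightarrow> 0"
    by (rule summable_LIMSEQ_zero[OF summable_exp])
  moreover have "e / exp \<bar>R\<bar> > 0" using \<open>e > 0\<close> by simp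
  ultimately obtain n where n: "norm (inverse (fact n) * \<bar>R\<bar> ^ n - 0) < e / exp \<bar>R\<bar>"
    using LIMSEQ_D by blast
  define \<psi> where "\<psi> t = (\<Sum>m<n. (1 / fact m) * t ^ m)" for t :: real
  have "\<psi> \<in> U" unfolding \<psi>_def[abs_def] by (intro sum_mem scale_mem assms)
  moreover have "\<bar>exp t - \<psi> t\<bar> \<le> e" if "\<bar>t\<bar> \<le> R" for t
  proof -
    obtain s where s: "\<bar>s\<bar> \<le> \<bar>t\<bar>" "exp t = (\<Sum>m<n. t ^ m / fact m) + (exp s / fact n) * t ^ n"
      using Maclaurin_exp_le by blast
    then have "exp t - \<psi> t = (exp s / fact n) * t ^ n" by (simp add: \<psi>_def)
    then have "\<bar>exp t - \<psi> t\<bar> = exp s * (inverse (fact n) * \<bar>t\<bar> ^ n)"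
      by (simp add: abs_mult power_abs divide_inverse)
    also have "\<dots> \<le> exp \<bar>R\<bar> * (inverse (fact n) * \<bar>R\<bar> ^ n)"
      using s that by (intro mult_mono power_mono mult_left_mono) auto
    also have "\<dots> \<le> e" using n by (simp add: field_simps)
    finally show ?thesis .
  qed
  ultimately show "\<exists>\<psi>\<in>U. \<forall>t. \<bar>t\<bar> \<le> R \<longrightarrow> \<bar>exp t - \<psi> t\<bar> \<le> e" by blast
qed

end

section \<open>Density of ridge functions\<close>

inductive_set exp_sums :: "('a::real_inner \<Rightarrow> real) set" where
  exp_sums_exp: "(\<lambda>x. c * exp (w \<bullet> x)) \<in> exp_sums"
| exp_sums_add: "f \<in> exp_sums \<Longrightarrow> g \<in> exp_sums \<Longrightarrow> (\<lambda>x. f x + g x) \<in> exp_sums"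

lemma exp_sums_mult_exp:
  assumes "g \<in> exp_sums"
  shows "(\<lambda>x. c * exp (w \<bullet> x) * g x) \<in> exp_sums"
  using assms
proof induction
  case (exp_sums_exp c' w')
  have "(\<lambda>x. (c * c') * exp ((w + w') \<bullet> x)) \<in> exp_sums" by (rule exp_sums.exp_sums_exp)
  then show ?case by (simp add: inner_add_left exp_add algebra_simps)
next
  case (exp_sums_add f g)
  then show ?case using exp_sums.exp_sums_add by (fastforce simp: distrib_left)
qed

lemma exp_sums_mult:
  assumes "f \<in> exp_sums" "g \<in> exp_sums"
  shows "(\<lambda>x. f x * g x) \<in> exp_sums"
  using assms(1)
proof induction
  case (exp_sums_exp c w)
  then show ?case by (rule exp_sums_mult_exp[OF assms(2)])
next
  case (exp_sums_add f1 f2)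
  then show ?case using exp_sums.exp_sums_add by (fastforce simp: distrib_right)
qed

lemma continuous_on_exp_sums: "f \<in> exp_sums \<Longrightarrow> continuous_on S f"
  by (induction rule: exp_sums.induct) (auto intro!: continuous_intros)

lemma const_in_exp_sums: "(\<lambda>x. c) \<in> exp_sums"
  using exp_sums_exp[of c 0] by simp

lemma exp_sums_separating:
  fixes x y :: "'a::real_inner"
  assumes "x \<noteq> y"
  shows "\<exists>f\<in>exp_sums. f x \<noteq> f y"
proof -
  have "(x - y) \<bullet> x - (x - y) \<bullet> y = (x - y) \<bullet> (x - y)" by (simp add: inner_diff_right)
  moreover have "(x - y) \<bullet> (x - y) > 0" using assms by simp
  ultimately have "(x - y) \<bullet> x \<noteq> (x - y) \<bullet> y" by linarith
  then have "1 * exp ((x - y) \<bullet> x) \<noteq> 1 * exp ((x - y) \<bullet> y)" by simp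
  then show ?thesis by (intro bexI[OF _ exp_sums_exp[of 1 "x - y"]])
qed

definition ridge_profiles :: "('a::real_inner \<Rightarrow> real) set \<Rightarrow> (real \<Rightarrow> real) set" where
  "ridge_profiles A = {\<phi>. continuous_on UNIV \<phi> \<and> (\<forall>w b. (\<lambda>x. \<phi> (w \<bullet> x + b)) \<in> A)}"

locale uniformly_closed_subspace =
  fixes \<Omega> :: "'a::real_inner set" and A :: "('a \<Rightarrow> real) set"
  assumes compact: "compact \<Omega>"
    and closed: "\<And>g. continuous_on \<Omega> g \<Longrightarrow>
        (\<And>\<delta>. \<delta> > 0 \<Longrightarrow> \<exists>f\<in>A. \<forall>x\<in>\<Omega>. \<bar>f x - g x\<bar> \<le> \<delta>) \<Longrightarrow> g \<in> A"
    and lincomb: "\<And>f g a. f \<in> A \<Longrightarrow> g \<in> A \<Longrightarrow> (\<lambda>x. a * f x + g x) \<in> A"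
    and const: "\<And>c. (\<lambda>x. c) \<in> A"
begin

lemma dilation_invariant_space_ridge_profiles: "dilation_invariant_space (ridge_profiles A)"
proof
  fix \<phi> assume "\<phi> \<in> ridge_profiles A"
  then show "continuous_on UNIV \<phi>" by (simp add: ridge_profiles_def)
next
  fix \<phi> \<psi> :: "real \<Rightarrow> real" and a :: real
  assume "\<phi> \<in> ridge_profiles A" "\<psi> \<in> ridge_profiles A"
  then show "(\<lambda>t. a * \<phi> t + \<psi> t) \<in> ridge_profiles A"
    by (auto simp: ridge_profiles_def intro!: continuous_intros lincomb)
next
  show "(\<lambda>t. c) \<in> ridge_profiles A" for c by (simp add: ridge_profiles_def const)
next
  fix \<phi> :: "real \<Rightarrow> real" and s c :: real
  assume \<phi>: "\<phi> \<in> ridge_profiles A"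
  have "(\<lambda>x. \<phi> (s * (w \<bullet> x + b) + c)) \<in> A" for w b
  proof -
    have "(\<lambda>x. \<phi> ((s *\<^sub>R w) \<bullet> x + (s * b + c))) \<in> A"
      using \<phi> unfolding ridge_profiles_def by blast
    then show ?thesis by (simp add: algebra_simps)
  qed
  moreover have "continuous_on UNIV (\<lambda>t. \<phi> (s * t + c))"
    using \<phi> unfolding ridge_profiles_def
    by (auto intro!: continuous_on_compose2[of UNIV \<phi>] continuous_intros)
  ultimately show "(\<lambda>t. \<phi> (s * t + c)) \<in> ridge_profiles A"
    by (simp add: ridge_profiles_def algebra_simps)
next
  fix \<phi> :: "real \<Rightarrow> real"
  assume "continuous_on UNIV \<phi>"
    and approx: "\<And>R e. e > 0 \<Longrightarrow> \<exists>\<psi>\<in>ridge_profiles A. \<forall>t. \<bar>t\<bar> \<le> R \<longrightarrow> \<bar>\<phi> t - \<psi> t\<bar> \<le> e"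
  have "(\<lambda>x. \<phi> (w \<bullet> x + b)) \<in> A" for w b
  proof (rule closed)
    show "continuous_on \<Omega> (\<lambda>x. \<phi> (w \<bullet> x + b))"
      by (rule continuous_on_compose2[OF \<open>continuous_on UNIV \<phi>\<close>]) (auto intro!: continuous_intros)
    obtain B where B: "\<And>x. x \<in> \<Omega> \<Longrightarrow> norm x \<le> B"
      using compact_imp_bounded[OF compact] unfolding bounded_iff by auto
    have ridge_bound: "\<bar>w \<bullet> x + b\<bar> \<le> norm w * B + \<bar>b\<bar>" if "x \<in> \<Omega>" for x
      using Cauchy_Schwarz_ineq2[of w x] mult_left_mono[OF B[OF that] norm_ge_zero[of w]] by linarith
    fix \<delta> :: real assume "\<delta> > 0"
    then obtain \<psi> where "\<psi> \<in> ridge_profiles A"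
      and "\<forall>t. \<bar>t\<bar> \<le> norm w * B + \<bar>b\<bar> \<longrightarrow> \<bar>\<phi> t - \<psi> t\<bar> \<le> \<delta>"
      using approx by blast
    then show "\<exists>f\<in>A. \<forall>x\<in>\<Omega>. \<bar>f x - \<phi> (w \<bullet> x + b)\<bar> \<le> \<delta>"
      using ridge_bound
      by (intro bexI[of _ "\<lambda>x. \<psi> (w \<bullet> x + b)"]) (auto simp: ridge_profiles_def abs_minus_commute)
  qed
  then show "\<phi> \<in> ridge_profiles A"
    using \<open>continuous_on UNIV \<phi>\<close> by (simp add: ridge_profiles_def)
qed

lemma exp_sums_subset:
  assumes "exp \<in> ridge_profiles A"
  shows "(exp_sums :: ('a \<Rightarrow> real) set) \<subseteq> A"
proof
  fix f :: "'a \<Rightarrow> real" assume "f \<in> exp_sums"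
  then show "f \<in> A"
  proof induction
    case (exp_sums_exp c w)
    have "(\<lambda>x. exp (w \<bullet> x + 0)) \<in> A" using assms by (simp only: ridge_profiles_def) blast
    then show ?case using lincomb[of _ "\<lambda>x. 0" c] const by simp
  next
    case (exp_sums_add f g)
    then show ?case using lincomb[of f g 1] by simp
  qed
qed

theorem mem_if_ridges_mem:
  assumes "continuous_on UNIV \<rho>" "\<not> (\<exists>p. \<forall>x. \<rho> x = poly p x)"
    and "\<And>w b. (\<lambda>x. \<rho> (w \<bullet> x + b)) \<in> A"
    and "continuous_on \<Omega> g"
  shows "g \<in> A"
proof -
  interpret profiles: dilation_invariant_space "ridge_profiles A"
    by (rule dilation_invariant_space_ridge_profiles)
  have "\<rho> \<in> ridge_profiles A" using assms(1,3) by (simp add: ridge_profiles_def)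
  then have "exp \<in> ridge_profiles A"
    using assms(2) by (intro profiles.exp_mem profiles.monomial_mem)
  then have "exp_sums \<subseteq> A" by (rule exp_sums_subset)
  interpret function_ring_on exp_sums \<Omega>
    by unfold_locales (auto intro: compact continuous_on_exp_sums exp_sums_add exp_sums_mult
        const_in_exp_sums exp_sums_separating)
  show ?thesis
  proof (rule closed[OF assms(4)])
    fix \<delta> :: real assume "\<delta> > 0"
    then obtain f where "f \<in> exp_sums" "\<forall>x\<in>\<Omega>. \<bar>g x - f x\<bar> < \<delta>"
      using Stone_Weierstrass_basic[OF assms(4)] by blast
    then show "\<exists>f\<in>A. \<forall>x\<in>\<Omega>. \<bar>f x - g x\<bar> \<le> \<delta>"
      using \<open>exp_sums \<subseteq> A\<close>
      by (intro bexI[of _ f]) (auto simp: abs_minus_commute less_imp_le)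
  qed
qed

end

section \<open>Realisations of networks\<close>

lemma continuous_on_act:
  assumes "continuous_on UNIV \<rho>" "\<And>i. continuous_on S (\<lambda>x. y x i)"
  shows "continuous_on S (\<lambda>x. act \<rho> n (y x) j)"
  unfolding act_def by (cases "j < n") (auto intro: continuous_on_compose2[OF assms])

lemma continuous_on_affine:
  assumes "\<And>i. continuous_on S (\<lambda>x. y x i)"
  shows "continuous_on S (\<lambda>x. affine m n Ab (y x) i)"
  unfolding affine_def by (cases "i < m") (auto intro!: continuous_intros assms)

lemma continuous_on_net_tail:
  assumes "continuous_on UNIV \<rho>" "\<And>i. continuous_on S (\<lambda>x. y x i)"
  shows "continuous_on S (\<lambda>x. net_tail \<rho> n ms \<Phi> (y x) i)"
  using assms(2)
proof (induction ms arbitrary: n \<Phi> y i)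
  case Nil
  then show ?case by (cases \<Phi>) auto
next
  case (Cons m ms)
  show ?case
  proof (cases \<Phi>)
    case (Cons Ab \<Phi>')
    have "continuous_on S (\<lambda>x. net_tail \<rho> m ms \<Phi>' (affine m n Ab (act \<rho> n (y x))) i)"
      by (rule Cons.IH) (intro continuous_on_affine continuous_on_act[OF assms(1)] Cons.prems)
    then show ?thesis using Cons by simp
  qed (use Cons.prems in simp)
qed

lemma continuous_on_RNN:
  assumes "continuous_on UNIV \<rho>" "f \<in> RNN \<rho> Ns"
  shows "continuous_on S f"
proof -
  obtain W c \<Phi> where "f = (\<lambda>x. net_tail \<rho> (hd Ns) (tl Ns @ [1]) \<Phi>
                     (\<lambda>i. if i < hd Ns then W i \<bullet> x + c i else 0) 0)"
    using assms(2) unfolding RNN_def by blast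
  moreover have "continuous_on S (\<lambda>x. if i < hd Ns then W i \<bullet> x + c i else 0)" for i
    by (cases "i < hd Ns") (auto intro!: continuous_intros)
  ultimately show ?thesis by (simp add: continuous_on_net_tail[OF assms(1)])
qed

lemma RNN_nonempty: "RNN \<rho> Ns \<noteq> {}"
  unfolding RNN_def by (auto intro!: exI[of _ "replicate (length Ns) undefined"])

definition postcompose_affine :: "real \<Rightarrow> real \<Rightarrow> layer \<Rightarrow> layer" where
  "postcompose_affine a c Ab = ((\<lambda>i j. a * fst Ab i j), (\<lambda>i. a * snd Ab i + c))"

lemma net_tail_postcompose_affine:
  assumes "length ms = length \<Phi>" "\<Phi> \<noteq> []" "\<forall>m\<in>set ms. 0 < m"
  shows "net_tail \<rho> n ms (butlast \<Phi> @ [postcompose_affine a c (last \<Phi>)]) y 0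
    = a * net_tail \<rho> n ms \<Phi> y 0 + c"
  using assms
proof (induction \<Phi> arbitrary: n ms y)
  case Nil
  then show ?case by simp
next
  case (Cons Ab \<Phi>)
  then obtain m ms' where ms: "ms = m # ms'" "m > 0" by (cases ms) auto
  show ?case
  proof (cases "\<Phi> = []")
    case True
    then have "ms' = []" using Cons.prems ms by simp
    then show ?thesis
      using True ms by (simp add: affine_def postcompose_affine_def sum_distrib_left algebra_simps)
  next
    case False
    then show ?thesis using Cons ms by simp
  qed
qed

lemma RNN_postcompose_affine:
  assumes "f \<in> RNN \<rho> Ns" "Ns \<noteq> []" "\<forall>n\<in>set Ns. 0 < n"
  shows "(\<lambda>x. a * f x + c) \<in> RNN \<rho> Ns"
proof -
  obtain W c' \<Phi> where f: "f = (\<lambda>x. net_tail \<rho> (hd Ns) (tl Ns @ [1]) \<Phi>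
                     (\<lambda>i. if i < hd Ns then W i \<bullet> x + c' i else 0) 0)"
    and "length \<Phi> = length Ns"
    using assms(1) unfolding RNN_def by blast
  moreover from this have "\<Phi> \<noteq> []" "length (tl Ns @ [1]) = length \<Phi>" "\<forall>m\<in>set (tl Ns @ [1]). 0 < m"
    using assms(2,3) by (cases Ns; auto)+
  ultimately show ?thesis
    unfolding RNN_def using net_tail_postcompose_affine[of "tl Ns @ [1]" \<Phi> \<rho> "hd Ns" a c]
    by (intro CollectI exI[of _ W] exI[of _ c'] exI[of _ "butlast \<Phi> @ [postcompose_affine a c (last \<Phi>)]"])
       auto
qed

text \<open>Realised by networks whose hidden layers only use neuron 0.\<close>
fun scalar_chain :: "(real \<Rightarrow> real) \<Rightarrow> (real \<times> real) list \<Rightarrow> real \<Rightarrow> real" where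
  "scalar_chain \<rho> [] z = z"
| "scalar_chain \<rho> ((a, c) # ps) z = scalar_chain \<rho> ps (a * \<rho> z + c)"

definition scalar_layer :: "real \<times> real \<Rightarrow> layer" where
  "scalar_layer p = ((\<lambda>i j. if i = 0 \<and> j = 0 then fst p else 0), (\<lambda>i. if i = 0 then snd p else 0))"

lemma net_tail_scalar_layers:
  assumes "length ms = length ps" "\<forall>m\<in>set ms. 0 < m" "n > 0"
  shows "net_tail \<rho> n ms (map scalar_layer ps) y 0 = scalar_chain \<rho> ps (y 0)"
  using assms
proof (induction ps arbitrary: n ms y)
  case Nil
  then show ?case by simp
next
  case (Cons p ps)
  then obtain m ms' where ms: "ms = m # ms'" "m > 0" by (cases ms) auto
  have "(\<Sum>j<n. fst (scalar_layer p) 0 j * act \<rho> n y j) = (\<Sum>j<n. if j = 0 then fst p * \<rho> (y 0) else 0)"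
    using Cons.prems(3) by (intro sum.cong) (auto simp: scalar_layer_def act_def)
  also have "\<dots> = fst p * \<rho> (y 0)" using Cons.prems(3) by simp
  finally have "(\<Sum>j<n. fst (scalar_layer p) 0 j * act \<rho> n y j) = fst p * \<rho> (y 0)" .
  then have "affine m n (scalar_layer p) (act \<rho> n y) 0 = fst p * \<rho> (y 0) + snd p"
    using ms by (simp add: affine_def scalar_layer_def)
  then show ?case using Cons ms by (cases p) simp
qed

lemma RNN_scalar_chain:
  assumes "Ns \<noteq> []" "\<forall>n\<in>set Ns. 0 < n" "length ps = length Ns"
  shows "(\<lambda>x. scalar_chain \<rho> ps (w \<bullet> x + b)) \<in> RNN \<rho> Ns"
proof -
  have "hd Ns > 0" "length (tl Ns @ [1]) = length ps" "\<forall>m\<in>set (tl Ns @ [1]). 0 < m"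
    using assms by (cases Ns; auto)+
  then show ?thesis
    unfolding RNN_def using net_tail_scalar_layers[of "tl Ns @ [1]" ps "hd Ns" \<rho>] assms(3)
    by (intro CollectI exI[of _ "\<lambda>i. if i = 0 then w else 0"] exI[of _ "\<lambda>i. if i = 0 then b else 0"]
        exI[of _ "map scalar_layer ps"]) auto
qed

lemma rescaled_neuron_near_identity:
  assumes "(\<rho> has_real_derivative D) (at x0)" "D \<noteq> 0" "\<eta> > 0"
  obtains h where "h > 0" "\<And>u. \<bar>u\<bar> \<le> R \<Longrightarrow> \<bar>(\<rho> (x0 + h * u) - \<rho> x0) / (h * D) - u\<bar> \<le> \<eta>"
proof -
  define R' where "R' = \<bar>R\<bar> + 1"
  have "R' > 0" by (simp add: R'_def)
  have "(\<lambda>y. (\<rho> (x0 + y) - \<rho> x0) / y) \<midarrow>0\<rightarrow> D" by (rule DERIV_D[OF assms(1)])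
  moreover have "\<eta> * \<bar>D\<bar> / R' > 0" using assms(2,3) \<open>R' > 0\<close> by simp
  ultimately obtain \<delta> where "\<delta> > 0" and \<delta>: "\<forall>y. y \<noteq> 0 \<and> norm (y - 0) < \<delta> \<longrightarrow>
      norm ((\<rho> (x0 + y) - \<rho> x0) / y - D) < \<eta> * \<bar>D\<bar> / R'"
    using LIM_D by blast
  define h where "h = \<delta> / (2 * R')"
  have "h > 0" using \<open>\<delta> > 0\<close> \<open>R' > 0\<close> by (simp add: h_def)
  have "\<bar>(\<rho> (x0 + h * u) - \<rho> x0) / (h * D) - u\<bar> \<le> \<eta>" if "\<bar>u\<bar> \<le> R" for u
  proof (cases "u = 0")
    case False
    have "\<bar>h * u\<bar> \<le> h * R'" using \<open>h > 0\<close> that by (simp add: abs_mult R'_def)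
    also have "\<dots> < \<delta>" using \<open>\<delta> > 0\<close> \<open>R' > 0\<close> by (simp add: h_def)
    finally have quotient: "\<bar>(\<rho> (x0 + h * u) - \<rho> x0) / (h * u) - D\<bar> < \<eta> * \<bar>D\<bar> / R'"
      using \<delta> False \<open>h > 0\<close> by simp
    have "(\<rho> (x0 + h * u) - \<rho> x0) / (h * D) - u
        = ((\<rho> (x0 + h * u) - \<rho> x0) / (h * u) - D) * (u / D)"
      using False \<open>h > 0\<close> assms(2) by (simp add: field_simps)
    then have "\<bar>(\<rho> (x0 + h * u) - \<rho> x0) / (h * D) - u\<bar>
        = \<bar>(\<rho> (x0 + h * u) - \<rho> x0) / (h * u) - D\<bar> * (\<bar>u\<bar> / \<bar>D\<bar>)"
      by (simp add: abs_mult abs_divide)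
    also have "\<dots> \<le> (\<eta> * \<bar>D\<bar> / R') * (R' / \<bar>D\<bar>)"
      using quotient that assms(2) by (intro mult_mono divide_right_mono) (auto simp: R'_def)
    also have "\<dots> = \<eta>" using assms(2) \<open>R' > 0\<close> by simp
    finally show ?thesis .
  qed (use assms(3) in simp)
  with \<open>h > 0\<close> show ?thesis using that by blast
qed

lemma scalar_chain_approx:
  assumes "(\<rho> has_real_derivative D) (at x0)" "D \<noteq> 0" "continuous_on UNIV \<rho>" "\<epsilon> > 0"
  obtains ps where "length ps = Suc m"
    "\<And>z. \<bar>\<rho> z\<bar> \<le> R \<Longrightarrow> \<bar>scalar_chain \<rho> ps z - (a * \<rho> z + c)\<bar> < \<epsilon>"
proof -
  have "\<exists>ps. length ps = Suc m \<and> (\<forall>z. \<bar>\<rho> z\<bar> \<le> R \<longrightarrow> \<bar>scalar_chain \<rho> ps z - (a * \<rho> z + c)\<bar> < \<epsilon>)"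
    using assms(4)
  proof (induction m arbitrary: R \<epsilon> a c)
    case 0
    then show ?case by (intro exI[of _ "[(a, c)]"]) simp
  next
    case (Suc m)
    define \<eta> where "\<eta> = \<epsilon> / (2 * (\<bar>a\<bar> + 1))"
    have "\<eta> > 0" using Suc.prems by (simp add: \<eta>_def)
    have "\<bar>a\<bar> * \<eta> < \<epsilon> / 2"
      using Suc.prems by (simp add: \<eta>_def field_simps)
    obtain h where "h > 0"
      and h: "\<And>u. \<bar>u\<bar> \<le> R \<Longrightarrow> \<bar>(\<rho> (x0 + h * u) - \<rho> x0) / (h * D) - u\<bar> \<le> \<eta>"
      using rescaled_neuron_near_identity[OF assms(1,2) \<open>\<eta> > 0\<close>] by blast
    have "bounded (\<rho> ` {x0 - h * \<bar>R\<bar> .. x0 + h * \<bar>R\<bar>})"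
      by (intro compact_imp_bounded compact_continuous_image continuous_on_subset[OF assms(3)]) auto
    then obtain B where B: "\<forall>v \<in> {x0 - h * \<bar>R\<bar> .. x0 + h * \<bar>R\<bar>}. \<bar>\<rho> v\<bar> \<le> B"
      unfolding bounded_iff by auto
    obtain ps where "length ps = Suc m" and ps: "\<And>v. \<bar>\<rho> v\<bar> \<le> B \<Longrightarrow>
        \<bar>scalar_chain \<rho> ps v - (a / (h * D) * \<rho> v + (c - a * \<rho> x0 / (h * D)))\<bar> < \<epsilon> / 2"
      using Suc.IH[of "\<epsilon> / 2" B "a / (h * D)" "c - a * \<rho> x0 / (h * D)"] Suc.prems by auto
    have "\<bar>scalar_chain \<rho> ((h, x0) # ps) z - (a * \<rho> z + c)\<bar> < \<epsilon>" if "\<bar>\<rho> z\<bar> \<le> R" for z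
    proof -
      define v where "v = x0 + h * \<rho> z"
      define y where "y = a / (h * D) * \<rho> v + (c - a * \<rho> x0 / (h * D))"
      have "\<bar>h * \<rho> z\<bar> \<le> h * \<bar>R\<bar>" using \<open>h > 0\<close> that by (simp add: abs_mult)
      then have "v \<in> {x0 - h * \<bar>R\<bar> .. x0 + h * \<bar>R\<bar>}" by (auto simp: v_def abs_le_iff)
      then have "\<bar>scalar_chain \<rho> ps v - y\<bar> < \<epsilon> / 2"
        unfolding y_def using B by (intro ps) auto
      moreover have "y - (a * \<rho> z + c) = a * ((\<rho> (x0 + h * \<rho> z) - \<rho> x0) / (h * D) - \<rho> z)"
        using \<open>h > 0\<close> assms(2) by (simp add: y_def v_def field_simps)
      then have "\<bar>y - (a * \<rho> z + c)\<bar> \<le> \<bar>a\<bar> * \<eta>"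
        using h[OF that] by (simp add: abs_mult mult_left_mono)
      moreover have "scalar_chain \<rho> ((h, x0) # ps) z = scalar_chain \<rho> ps v"
        by (simp add: v_def add.commute)
      ultimately show ?thesis using \<open>\<bar>a\<bar> * \<eta> < \<epsilon> / 2\<close> by linarith
    qed
    then show ?case using \<open>length ps = Suc m\<close> by (intro exI[of _ "(h, x0) # ps"]) auto
  qed
  then show ?thesis using that by blast
qed

lemma ridge_approx_RNN:
  fixes \<Omega> :: "(real^'d) set"
  assumes "Ns \<noteq> []" "\<forall>n\<in>set Ns. 0 < n" "compact \<Omega>" "continuous_on UNIV \<rho>"
    and "(\<rho> has_real_derivative D) (at x0)" "D \<noteq> 0" "\<delta> > 0"
  shows "\<exists>f\<in>RNN \<rho> Ns. \<forall>x\<in>\<Omega>. \<bar>f x - \<rho> (w \<bullet> x + b)\<bar> \<le> \<delta>"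
proof -
  have "bounded ((\<lambda>x. \<rho> (w \<bullet> x + b)) ` \<Omega>)"
    by (intro compact_imp_bounded compact_continuous_image continuous_on_compose2[OF assms(4)]
        continuous_intros assms(3)) auto
  then obtain R where R: "\<And>x. x \<in> \<Omega> \<Longrightarrow> \<bar>\<rho> (w \<bullet> x + b)\<bar> \<le> R"
    unfolding bounded_iff by auto
  obtain ps where "length ps = Suc (length Ns - 1)"
    and ps: "\<And>z. \<bar>\<rho> z\<bar> \<le> R \<Longrightarrow> \<bar>scalar_chain \<rho> ps z - (1 * \<rho> z + 0)\<bar> < \<delta>"
    using scalar_chain_approx[OF assms(5,6,4,7), of "length Ns - 1" R 1 0] by blast
  then have "(\<lambda>x. scalar_chain \<rho> ps (w \<bullet> x + b)) \<in> RNN \<rho> Ns"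
    using assms(1,2) by (intro RNN_scalar_chain) auto
  then show ?thesis
    using ps R by (intro bexI[of _ "\<lambda>x. scalar_chain \<rho> ps (w \<bullet> x + b)"]) (auto intro: less_imp_le)
qed

section \<open>Closure in C(\<Omega>) and \<epsilon>-convexity\<close>

lemma sup_dist_le:
  assumes "\<And>x. x \<in> \<Omega> \<Longrightarrow> \<bar>f x - g x\<bar> \<le> e" "e \<ge> 0"
  shows "sup_dist \<Omega> f g \<le> e"
  using assms unfolding sup_dist_def by (auto intro: cSUP_least)

lemma abs_le_sup_dist:
  fixes \<Omega> :: "'a::metric_space set"
  assumes "compact \<Omega>" "continuous_on \<Omega> f" "continuous_on \<Omega> g" "x \<in> \<Omega>"
  shows "\<bar>f x - g x\<bar> \<le> sup_dist \<Omega> f g"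
proof -
  have "bounded ((\<lambda>x. \<bar>f x - g x\<bar>) ` \<Omega>)"
    using assms by (intro compact_imp_bounded compact_continuous_image continuous_intros)
  then show ?thesis
    using assms(4) unfolding sup_dist_def by (auto intro: cSUP_upper bounded_imp_bdd_above)
qed

locale continuous_family_on_compact =
  fixes \<Omega> :: "'a::metric_space set" and F :: "('a \<Rightarrow> real) set"
  assumes compact: "compact \<Omega>" and continuous: "\<And>f. f \<in> F \<Longrightarrow> continuous_on \<Omega> f"
begin

lemma continuous_on_C_closure: "g \<in> C_closure \<Omega> F \<Longrightarrow> continuous_on \<Omega> g"
  by (simp add: C_closure_def)

lemma mem_C_closure_iff:
  "g \<in> C_closure \<Omega> F \<longleftrightarrow> continuous_on \<Omega> g \<and> (\<forall>\<delta>>0. \<exists>f\<in>F. \<forall>x\<in>\<Omega>. \<bar>f x - g x\<bar> \<le> \<delta>)"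
proof
  assume g: "g \<in> C_closure \<Omega> F"
  have "\<exists>f\<in>F. \<forall>x\<in>\<Omega>. \<bar>f x - g x\<bar> \<le> \<delta>" if "\<delta> > 0" for \<delta>
  proof -
    obtain f where "f \<in> F" "sup_dist \<Omega> f g < \<delta>"
      using g \<open>\<delta> > 0\<close> unfolding C_closure_def by blast
    moreover have "\<bar>f x - g x\<bar> \<le> \<delta>" if "x \<in> \<Omega>" for x
      using abs_le_sup_dist[OF compact continuous[OF \<open>f \<in> F\<close>] continuous_on_C_closure[OF g] that]
        \<open>sup_dist \<Omega> f g < \<delta>\<close> by linarith
    ultimately show ?thesis by blast
  qed
  then show "continuous_on \<Omega> g \<and> (\<forall>\<delta>>0. \<exists>f\<in>F. \<forall>x\<in>\<Omega>. \<bar>f x - g x\<bar> \<le> \<delta>)"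
    using continuous_on_C_closure[OF g] by blast
next
  assume g: "continuous_on \<Omega> g \<and> (\<forall>\<delta>>0. \<exists>f\<in>F. \<forall>x\<in>\<Omega>. \<bar>f x - g x\<bar> \<le> \<delta>)"
  have "\<exists>f\<in>F. sup_dist \<Omega> f g < \<delta>" if "\<delta> > 0" for \<delta>
  proof -
    obtain f where "f \<in> F" "\<forall>x\<in>\<Omega>. \<bar>f x - g x\<bar> \<le> \<delta> / 2" using g \<open>\<delta> > 0\<close> half_gt_zero by blast
    then have "sup_dist \<Omega> f g \<le> \<delta> / 2" using \<open>\<delta> > 0\<close> by (intro sup_dist_le) auto
    then show ?thesis using \<open>f \<in> F\<close> \<open>\<delta> > 0\<close> by (intro bexI[of _ f]) auto
  qed
  then show "g \<in> C_closure \<Omega> F" using g by (simp add: C_closure_def)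
qed

lemma C_closure_superset: "f \<in> F \<Longrightarrow> f \<in> C_closure \<Omega> F"
  unfolding mem_C_closure_iff using continuous by (auto intro: bexI[of _ f])

lemma C_closure_uniformly_closed:
  assumes "continuous_on \<Omega> g"
    and approx: "\<And>\<delta>. \<delta> > 0 \<Longrightarrow> \<exists>f\<in>C_closure \<Omega> F. \<forall>x\<in>\<Omega>. \<bar>f x - g x\<bar> \<le> \<delta>"
  shows "g \<in> C_closure \<Omega> F"
  unfolding mem_C_closure_iff
proof (intro conjI assms(1) allI impI)
  fix \<delta> :: real assume "\<delta> > 0"
  then obtain f1 where f1: "f1 \<in> C_closure \<Omega> F" "\<forall>x\<in>\<Omega>. \<bar>f1 x - g x\<bar> \<le> \<delta> / 2"
    using approx half_gt_zero by blast
  then obtain f where "f \<in> F" and f: "\<forall>x\<in>\<Omega>. \<bar>f x - f1 x\<bar> \<le> \<delta> / 2"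
    using \<open>\<delta> > 0\<close> half_gt_zero unfolding mem_C_closure_iff by blast
  have "\<bar>f x - g x\<bar> \<le> \<delta>" if "x \<in> \<Omega>" for x
    using bspec[OF f that] bspec[OF f1(2) that] by linarith
  with \<open>f \<in> F\<close> show "\<exists>f\<in>F. \<forall>x\<in>\<Omega>. \<bar>f x - g x\<bar> \<le> \<delta>" by blast
qed

lemma C_closure_affine:
  assumes "\<And>f a c. f \<in> F \<Longrightarrow> (\<lambda>x. a * f x + c) \<in> F" and "g \<in> C_closure \<Omega> F"
  shows "(\<lambda>x. a * g x + c) \<in> C_closure \<Omega> F"
  unfolding mem_C_closure_iff
proof (intro conjI allI impI)
  show "continuous_on \<Omega> (\<lambda>x. a * g x + c)"
    using continuous_on_C_closure[OF assms(2)] by (intro continuous_intros)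
  fix \<delta> :: real assume "\<delta> > 0"
  then have "\<delta> / (\<bar>a\<bar> + 1) > 0" by simp
  then obtain f where "f \<in> F" and f: "\<forall>x\<in>\<Omega>. \<bar>f x - g x\<bar> \<le> \<delta> / (\<bar>a\<bar> + 1)"
    using assms(2) unfolding mem_C_closure_iff by blast
  have "\<bar>(a * f x + c) - (a * g x + c)\<bar> \<le> \<delta>" if "x \<in> \<Omega>" for x
  proof -
    have "\<bar>(a * f x + c) - (a * g x + c)\<bar> = \<bar>a\<bar> * \<bar>f x - g x\<bar>"
      by (simp add: abs_mult[symmetric] algebra_simps)
    also have "\<dots> \<le> (\<bar>a\<bar> + 1) * (\<delta> / (\<bar>a\<bar> + 1))"
      using f that by (intro mult_mono) auto
    finally show ?thesis by simp
  qed
  then show "\<exists>f\<in>F. \<forall>x\<in>\<Omega>. \<bar>f x - (a * g x + c)\<bar> \<le> \<delta>"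
    using assms(1)[OF \<open>f \<in> F\<close>] by (intro bexI[of _ "\<lambda>x. a * f x + c"]) auto
qed

lemma C_closure_add_if_eps_convex:
  assumes "\<And>f a c. f \<in> F \<Longrightarrow> (\<lambda>x. a * f x + c) \<in> F" and "\<epsilon> > 0" "eps_convex \<Omega> \<epsilon> (C_closure \<Omega> F)"
    and f: "f \<in> C_closure \<Omega> F" and g: "g \<in> C_closure \<Omega> F"
  shows "(\<lambda>x. f x + g x) \<in> C_closure \<Omega> F"
proof (rule C_closure_uniformly_closed)
  note scale = C_closure_affine[OF assms(1), where c = 0, simplified]
  show "continuous_on \<Omega> (\<lambda>x. f x + g x)"
    using continuous_on_C_closure[OF f] continuous_on_C_closure[OF g] by (intro continuous_intros)
  fix \<delta> :: real assume "\<delta> > 0"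
  define t where "t = 2 * \<epsilon> / \<delta>"
  have "t > 0" using \<open>\<epsilon> > 0\<close> \<open>\<delta> > 0\<close> by (simp add: t_def)
  define m where "m x = t * (f x + g x) / 2" for x
  define tfg where "tfg i = (if i = 0 then (\<lambda>x. t * f x) else (\<lambda>x. t * g x))" for i :: nat
  have "m = (\<lambda>x. \<Sum>i<2. 1 / 2 * tfg i x)"
    by (simp add: fun_eq_iff m_def tfg_def numeral_2_eq_2 lessThan_Suc algebra_simps)
  moreover have "tfg i \<in> C_closure \<Omega> F" for i
    using scale[OF f, of t] scale[OF g, of t] by (simp add: tfg_def)
  ultimately have "m \<in> fun_convex_hull (C_closure \<Omega> F)"
    unfolding fun_convex_hull_def by (intro CollectI exI[of _ 2] exI[of _ "\<lambda>_. 1 / 2"] exI[of _ tfg]) simp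
  then obtain h where h: "h \<in> C_closure \<Omega> F" "sup_dist \<Omega> m h < \<epsilon>"
    using assms(3) unfolding eps_convex_def by blast
  have "continuous_on \<Omega> m"
    unfolding m_def using continuous_on_C_closure[OF f] continuous_on_C_closure[OF g]
    by (intro continuous_intros) auto
  have "\<bar>(2 / t) * h x - (f x + g x)\<bar> \<le> \<delta>" if "x \<in> \<Omega>" for x
  proof -
    have "\<bar>m x - h x\<bar> < \<epsilon>"
      using abs_le_sup_dist[OF compact \<open>continuous_on \<Omega> m\<close> continuous_on_C_closure[OF h(1)] that] h(2)
      by linarith
    have "(2 / t) * h x - (f x + g x) = (2 / t) * (h x - m x)"
      using \<open>t > 0\<close> by (simp add: m_def field_simps)
    then have "\<bar>(2 / t) * h x - (f x + g x)\<bar> = (2 / t) * \<bar>m x - h x\<bar>"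
      using \<open>t > 0\<close> by (simp only: abs_mult abs_minus_commute[of "h x" "m x"]) simp
    also have "\<dots> \<le> (2 / t) * \<epsilon>"
      using \<open>t > 0\<close> \<open>\<bar>m x - h x\<bar> < \<epsilon>\<close> by (intro mult_left_mono) auto
    also have "\<dots> = \<delta>" using \<open>\<epsilon> > 0\<close> \<open>\<delta> > 0\<close> by (simp add: t_def)
    finally show ?thesis .
  qed
  then show "\<exists>f'\<in>C_closure \<Omega> F. \<forall>x\<in>\<Omega>. \<bar>f' x - (f x + g x)\<bar> \<le> \<delta>"
    using scale[OF h(1), of "2 / t"] by (intro bexI[of _ "\<lambda>x. (2 / t) * h x"]) auto
qed

end

lemma uniformly_closed_subspace_C_closure:
  fixes \<Omega> :: "'a::real_inner set"
  assumes "continuous_family_on_compact \<Omega> F" "F \<noteq> {}"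
    and affine: "\<And>f a c. f \<in> F \<Longrightarrow> (\<lambda>x. a * f x + c) \<in> F"
    and "\<epsilon> > 0" "eps_convex \<Omega> \<epsilon> (C_closure \<Omega> F)"
  shows "uniformly_closed_subspace \<Omega> (C_closure \<Omega> F)"
proof -
  interpret continuous_family_on_compact \<Omega> F by fact
  show ?thesis
  proof
    show "compact \<Omega>" by (rule compact)
    show "g \<in> C_closure \<Omega> F"
      if "continuous_on \<Omega> g" "\<And>\<delta>. \<delta> > 0 \<Longrightarrow> \<exists>f\<in>C_closure \<Omega> F. \<forall>x\<in>\<Omega>. \<bar>f x - g x\<bar> \<le> \<delta>" for g
      using C_closure_uniformly_closed[OF that] .
    show "(\<lambda>x. a * f x + g x) \<in> C_closure \<Omega> F"
      if "f \<in> C_closure \<Omega> F" "g \<in> C_closure \<Omega> F" for f g a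
      using C_closure_add_if_eps_convex[OF affine assms(4,5) C_closure_affine[OF affine that(1), of a 0] that(2)]
      by simp
    obtain f where "f \<in> F" using assms(2) by blast
    then have "(\<lambda>x. c) \<in> F" for c using affine[of f 0 c] by simp
    then show "(\<lambda>x. c) \<in> C_closure \<Omega> F" for c by (rule C_closure_superset)
  qed
qed

theorem theorem2p2:
  fixes \<rho> :: "real \<Rightarrow> real" and Ns :: "nat list" and \<Omega> :: "(real^'d) set"
  assumes "Ns \<noteq> []"
    and "\<forall>n\<in>set Ns. 0 < n"
    and "compact \<Omega>"
    and "continuous_on UNIV \<rho>"
    and "\<not> (\<exists>p :: real poly. \<forall>x. \<rho> x = poly p x)"
    and "\<exists>x0 D. (\<rho> has_real_derivative D) (at x0) \<and> D \<noteq> 0"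
    and "\<not> dense_in_C \<Omega> (RNN \<rho> Ns)"
  shows "\<not> (\<exists>\<epsilon>>0. eps_convex \<Omega> \<epsilon> (C_closure \<Omega> (RNN \<rho> Ns)))"
proof
  assume "\<exists>\<epsilon>>0. eps_convex \<Omega> \<epsilon> (C_closure \<Omega> (RNN \<rho> Ns))"
  then obtain \<epsilon> where "\<epsilon> > 0" "eps_convex \<Omega> \<epsilon> (C_closure \<Omega> (RNN \<rho> Ns))" by blast
  obtain x0 D where "(\<rho> has_real_derivative D) (at x0)" "D \<noteq> 0" using assms(6) by blast
  interpret RNN: continuous_family_on_compact \<Omega> "RNN \<rho> Ns"
    using assms(3) continuous_on_RNN[OF assms(4)] by unfold_locales
  have "uniformly_closed_subspace \<Omega> (C_closure \<Omega> (RNN \<rho> Ns))"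
    by (rule uniformly_closed_subspace_C_closure[OF RNN.continuous_family_on_compact_axioms RNN_nonempty _
          \<open>\<epsilon> > 0\<close> \<open>eps_convex \<Omega> \<epsilon> _\<close>])
       (rule RNN_postcompose_affine[OF _ assms(1,2)])
  then interpret uniformly_closed_subspace \<Omega> "C_closure \<Omega> (RNN \<rho> Ns)" .
  have "(\<lambda>x. \<rho> (w \<bullet> x + b)) \<in> C_closure \<Omega> (RNN \<rho> Ns)" for w b
    unfolding RNN.mem_C_closure_iff
    using ridge_approx_RNN[OF assms(1-4) \<open>(\<rho> has_real_derivative D) (at x0)\<close> \<open>D \<noteq> 0\<close>]
    by (auto intro!: continuous_on_compose2[OF assms(4)] continuous_intros)
  then have "dense_in_C \<Omega> (RNN \<rho> Ns)"
    unfolding dense_in_C_def by (blast intro: mem_if_ridges_mem[OF assms(4,5)])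
  with assms(7) show False ..
qed

end
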